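(* Let $T$ be a finite rooted tree with root $\rho$, arc set $A_T$ (arcs directed away from the root) and leaf set $X$, with a non-negative length $\lambda_a$ on each arc $a\in A_T$. Consider a trait-dependent field of bullets (t-FOB) model on $T$, defined as follows. For $j=1,\dots,k$, $\xi_j$ is a two-state Markov process on $T$ with state space $\{0,1\}$, strictly positive root probabilities $\pi^{(j)}_0,\pi^{(j)}_1$, and transition matrices $P^{(j)}(r,s)$ with $\det P^{(j)}(r,s)\ge 0$ for all arcs $(r,s)$; these $k$ processes are independent, and $\boldsymbol{\xi}=(\xi_1,\dots,\xi_k)$ assigns a state $\boldsymbol{\xi}(x)\in\{0,1\}^k$ to each leaf $x$. For each species $x\in X$ and each $\mathbf{i}\in\{0,1\}^k$ a number $p_x^{\mathbf{i}}\in[0,1]$ is given, such that $p_x^{\mathbf{i}}\le p_x^{\mathbf{l}}$ whenever $l_j\le i_j$ for all $j=1,\dots,k$. Conditional on the leaf states, the species go extinct independently, species $x$ in state $\mathbf{i}$ going extinct with probability $p_x^{\mathbf{i}}$. The associated generalized field of bullets (g-FOB) model is the model in which each species $x\in X$ goes extinct independently of the others with probability $p_x=\sum_{\mathbf{i}\in\{0,1\}^k}p_x^{\mathbf{i}}\,\mathbb{P}(\boldsymbol{\xi}(x)=\mathbf{i})$ (the same marginal extinction probability as under the t-FOB model). Then the expected future phylogenetic diversity under the t-FOB model is less than or equal to the expected future phylogenetic diversity under the associated g-FOB model.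
   Context: For $Y\subseteq X$, the phylogenetic diversity $\varphi_Y$ is the sum of the lengths of the arcs of the minimal subtree of $T$ connecting the root and the leaves in $Y$. Under an extinction model, the future phylogenetic diversity is the random variable $\varphi=\varphi_S$, where $S$ is the (random) set of species in $X$ that are not extinct. Equivalently, $\mathbb{E}[\varphi]=\sum_{a=(u,v)\in A_T}\lambda_a\bigl(1-\mathbb{P}(\text{all leaves in }C_v\text{ are extinct})\bigr)$, where $C_v$ is the set of leaves separated from the root by $v$ ($C_v=\{v\}$ if $v$ is a leaf). Markov processes on trees: $\xi(\rho)=i$ with probability $\pi_i$, and the $(i,l)$ entry of $P(r,s)$ is the conditional probability that $\xi(s)=l$ given $\xi(r)=i$, with the Markov property along the tree. *)

theory Defs
  imports Complex_Main "HOL-Library.FuncSet"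
begin

definition rooted_tree :: "'v set \<Rightarrow> ('v \<times> 'v) set \<Rightarrow> 'v \<Rightarrow> bool" where
  "rooted_tree V A rho \<longleftrightarrow>
     finite V \<and> A \<subseteq> V \<times> V \<and> rho \<in> V \<and>
     (\<forall>u. (u, rho) \<notin> A) \<and>
     (\<forall>v \<in> V - {rho}. \<exists>!u. (u, v) \<in> A) \<and>
     (\<forall>v \<in> V. (rho, v) \<in> A\<^sup>*)"

definition leaves :: "'v set \<Rightarrow> ('v \<times> 'v) set \<Rightarrow> 'v set" where
  "leaves V A = {v \<in> V. \<forall>w. (v, w) \<notin> A}"

definition clade :: "'v set \<Rightarrow> ('v \<times> 'v) set \<Rightarrow> 'v \<Rightarrow> 'v set" where
  "clade V A v = {x \<in> leaves V A. (v, x) \<in> A\<^sup>*}"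

text \<open>Phylogenetic diversity of Y: total length of the arcs of the minimal subtree
  connecting the root and the leaves in Y, i.e. arcs (u,v) lying on a path from the
  root to some y in Y.\<close>
definition PD :: "'v set \<Rightarrow> ('v \<times> 'v) set \<Rightarrow> (('v \<times> 'v) \<Rightarrow> real) \<Rightarrow> 'v set \<Rightarrow> real" where
  "PD V A lam Y = (\<Sum>a \<in> {a \<in> A. clade V A (snd a) \<inter> Y \<noteq> {}}. lam a)"

definition two_state_markov :: "('v \<times> 'v) set \<Rightarrow> (nat \<Rightarrow> real) \<Rightarrow> (('v \<times> 'v) \<Rightarrow> nat \<Rightarrow> nat \<Rightarrow> real) \<Rightarrow> bool" where
  "two_state_markov A rp P \<longleftrightarrow>
     rp 0 > 0 \<and> rp 1 > 0 \<and> rp 0 + rp 1 = 1 \<and>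
     (\<forall>a \<in> A. (\<forall>i \<in> {0,1}. \<forall>l \<in> {0,1}. P a i l \<ge> 0) \<and>
               (\<forall>i \<in> {0,1}. P a i 0 + P a i 1 = 1) \<and>
               P a 0 0 * P a 1 1 - P a 0 1 * P a 1 0 \<ge> 0)"

definition tree_prob :: "('v \<times> 'v) set \<Rightarrow> 'v \<Rightarrow> (nat \<Rightarrow> real) \<Rightarrow> (('v \<times> 'v) \<Rightarrow> nat \<Rightarrow> nat \<Rightarrow> real) \<Rightarrow> ('v \<Rightarrow> nat) \<Rightarrow> real" where
  "tree_prob A rho rp P \<sigma> = rp (\<sigma> rho) * (\<Prod>a \<in> A. P a (\<sigma> (fst a)) (\<sigma> (snd a)))"

definition states :: "nat \<Rightarrow> (nat \<Rightarrow> nat) set" where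
  "states k = {..<k} \<rightarrow>\<^sub>E {0, 1}"

definition configs :: "nat \<Rightarrow> 'v set \<Rightarrow> (nat \<Rightarrow> 'v \<Rightarrow> nat) set" where
  "configs k V = {..<k} \<rightarrow>\<^sub>E (V \<rightarrow>\<^sub>E {0, 1})"

definition joint_prob :: "nat \<Rightarrow> ('v \<times> 'v) set \<Rightarrow> 'v \<Rightarrow> (nat \<Rightarrow> nat \<Rightarrow> real) \<Rightarrow> (nat \<Rightarrow> ('v \<times> 'v) \<Rightarrow> nat \<Rightarrow> nat \<Rightarrow> real) \<Rightarrow> (nat \<Rightarrow> 'v \<Rightarrow> nat) \<Rightarrow> real" where
  "joint_prob k A rho rp P \<sigma>s = (\<Prod>j<k. tree_prob A rho (rp j) (P j) (\<sigma>s j))"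

definition leaf_state :: "nat \<Rightarrow> (nat \<Rightarrow> 'v \<Rightarrow> nat) \<Rightarrow> 'v \<Rightarrow> (nat \<Rightarrow> nat)" where
  "leaf_state k \<sigma>s x = restrict (\<lambda>j. \<sigma>s j x) {..<k}"

definition leaf_marginal :: "nat \<Rightarrow> 'v set \<Rightarrow> ('v \<times> 'v) set \<Rightarrow> 'v \<Rightarrow> (nat \<Rightarrow> nat \<Rightarrow> real) \<Rightarrow> (nat \<Rightarrow> ('v \<times> 'v) \<Rightarrow> nat \<Rightarrow> nat \<Rightarrow> real) \<Rightarrow> 'v \<Rightarrow> (nat \<Rightarrow> nat) \<Rightarrow> real" where
  "leaf_marginal k V A rho rp P x i =
     (\<Sum>\<sigma>s \<in> {\<sigma>s \<in> configs k V. leaf_state k \<sigma>s x = i}. joint_prob k A rho rp P \<sigma>s)"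

definition tfob_surv_prob :: "nat \<Rightarrow> 'v set \<Rightarrow> ('v \<times> 'v) set \<Rightarrow> 'v \<Rightarrow> (nat \<Rightarrow> nat \<Rightarrow> real) \<Rightarrow> (nat \<Rightarrow> ('v \<times> 'v) \<Rightarrow> nat \<Rightarrow> nat \<Rightarrow> real) \<Rightarrow> ('v \<Rightarrow> (nat \<Rightarrow> nat) \<Rightarrow> real) \<Rightarrow> 'v set \<Rightarrow> real" where
  "tfob_surv_prob k V A rho rp P p S =
     (\<Sum>\<sigma>s \<in> configs k V. joint_prob k A rho rp P \<sigma>s *
        (\<Prod>x \<in> S. 1 - p x (leaf_state k \<sigma>s x)) *
        (\<Prod>x \<in> leaves V A - S. p x (leaf_state k \<sigma>s x)))"

definition tfob_expected_PD :: "nat \<Rightarrow> 'v set \<Rightarrow> ('v \<times> 'v) set \<Rightarrow> 'v \<Rightarrow> (('v \<times> 'v) \<Rightarrow> real) \<Rightarrow> (nat \<Rightarrow> nat \<Rightarrow> real) \<Rightarrow> (nat \<Rightarrow> ('v \<times> 'v) \<Rightarrow> nat \<Rightarrow> nat \<Rightarrow> real) \<Rightarrow> ('v \<Rightarrow> (nat \<Rightarrow> nat) \<Rightarrow> real) \<Rightarrow> real" where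
  "tfob_expected_PD k V A rho lam rp P p =
     (\<Sum>S \<in> Pow (leaves V A). tfob_surv_prob k V A rho rp P p S * PD V A lam S)"

definition gfob_ext_prob :: "nat \<Rightarrow> 'v set \<Rightarrow> ('v \<times> 'v) set \<Rightarrow> 'v \<Rightarrow> (nat \<Rightarrow> nat \<Rightarrow> real) \<Rightarrow> (nat \<Rightarrow> ('v \<times> 'v) \<Rightarrow> nat \<Rightarrow> nat \<Rightarrow> real) \<Rightarrow> ('v \<Rightarrow> (nat \<Rightarrow> nat) \<Rightarrow> real) \<Rightarrow> 'v \<Rightarrow> real" where
  "gfob_ext_prob k V A rho rp P p x =
     (\<Sum>i \<in> states k. p x i * leaf_marginal k V A rho rp P x i)"

definition gfob_expected_PD :: "'v set \<Rightarrow> ('v \<times> 'v) set \<Rightarrow> (('v \<times> 'v) \<Rightarrow> real) \<Rightarrow> ('v \<Rightarrow> real) \<Rightarrow> real" where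
  "gfob_expected_PD V A lam q =
     (\<Sum>S \<in> Pow (leaves V A).
        (\<Prod>x \<in> S. 1 - q x) * (\<Prod>x \<in> leaves V A - S. q x) * PD V A lam S)"

end

theory Submission
  imports Defs
begin

text \<open>Since the expected PD is the sum over arcs (u, v) of the arc length times the
  probability that some species of the clade below v survives, it suffices to show that, for
  every clade C, all of C dies out under the t-FOB model with probability at least the product of
  the marginal extinction probabilities p_x, which is its probability under the g-FOB model.
  Conditional on the trait states, the probability that all of C dies out is a product of
  nonnegative functions that decrease in the states. The hypothesis det P \<ge> 0 says that each
  transition matrix is stochastically monotone, and for a Markov process with monotone kernels
  on a forest, decreasing functions are positively correlated (Harris inequality). This follows
  by integrating out the vertices one at a time from the leaves towards the roots, using
  Chebyshev's sum inequality for the two-point distribution at each step.\<close>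

section \<open>Harris inequality for monotone Markov forests\<close>

text \<open>A Markov process with states 0 and 1 on a forest: par gives the parent of a vertex,
  and K i s t is the probability that i is in state t given that its parent is in state s.
  A root reads its parent's state as 0, so K i 0 is its initial distribution.\<close>

definition parent_state :: "('s \<Rightarrow> 's option) \<Rightarrow> ('s \<Rightarrow> nat) \<Rightarrow> 's \<Rightarrow> nat" where
  "parent_state par \<sigma> i = (case par i of None \<Rightarrow> 0 | Some j \<Rightarrow> \<sigma> j)"

definition config_weight ::
    "('s \<Rightarrow> 's option) \<Rightarrow> ('s \<Rightarrow> nat \<Rightarrow> nat \<Rightarrow> real) \<Rightarrow> 's set \<Rightarrow> ('s \<Rightarrow> nat) \<Rightarrow> real" where
  "config_weight par K I \<sigma> = (\<Prod>i\<in>I. K i (parent_state par \<sigma> i) (\<sigma> i))"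

definition binary_configs :: "'s set \<Rightarrow> ('s \<Rightarrow> nat) set" where
  "binary_configs I = I \<rightarrow>\<^sub>E {0, 1}"

definition forest_expectation ::
    "('s \<Rightarrow> 's option) \<Rightarrow> ('s \<Rightarrow> nat \<Rightarrow> nat \<Rightarrow> real) \<Rightarrow> 's set \<Rightarrow> (('s \<Rightarrow> nat) \<Rightarrow> real) \<Rightarrow> real" where
  "forest_expectation par K I F = (\<Sum>\<sigma>\<in>binary_configs I. config_weight par K I \<sigma> * F \<sigma>)"

definition decreasing_on :: "'s set \<Rightarrow> (('s \<Rightarrow> nat) \<Rightarrow> real) \<Rightarrow> bool" where
  "decreasing_on I F \<longleftrightarrow>
     (\<forall>\<sigma>\<in>binary_configs I. \<forall>\<tau>\<in>binary_configs I. (\<forall>x\<in>I. \<sigma> x \<le> \<tau> x) \<longrightarrow> F \<tau> \<le> F \<sigma>)"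

definition parent_closed :: "('s \<Rightarrow> 's option) \<Rightarrow> 's set \<Rightarrow> bool" where
  "parent_closed par I \<longleftrightarrow> (\<forall>i\<in>I. \<forall>j. par i = Some j \<longrightarrow> j \<in> I)"

lemma decreasing_onD:
  "decreasing_on I F \<Longrightarrow> \<sigma> \<in> binary_configs I \<Longrightarrow> \<tau> \<in> binary_configs I \<Longrightarrow>
    (\<And>x. x \<in> I \<Longrightarrow> \<sigma> x \<le> \<tau> x) \<Longrightarrow> F \<tau> \<le> F \<sigma>"
  unfolding decreasing_on_def by blast

lemma decreasing_on_mult:
  assumes "decreasing_on I F" "decreasing_on I G"
    and "\<forall>\<sigma>\<in>binary_configs I. F \<sigma> \<ge> 0" "\<forall>\<sigma>\<in>binary_configs I. G \<sigma> \<ge> 0"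
  shows "decreasing_on I (\<lambda>\<sigma>. F \<sigma> * G \<sigma>)"
  using assms unfolding decreasing_on_def by (meson mult_mono)

lemma decreasing_on_prod:
  assumes "finite C" "\<forall>x\<in>C. decreasing_on I (f x) \<and> (\<forall>\<sigma>\<in>binary_configs I. f x \<sigma> \<ge> 0)"
  shows "decreasing_on I (\<lambda>\<sigma>. \<Prod>x\<in>C. f x \<sigma>)"
  using assms
proof (induction C rule: finite_induct)
  case empty
  then show ?case by (simp add: decreasing_on_def)
next
  case (insert a C)
  have "decreasing_on I (\<lambda>\<sigma>. f a \<sigma> * (\<Prod>x\<in>C. f x \<sigma>))"
    by (rule decreasing_on_mult) (use insert in \<open>auto intro: prod_nonneg\<close>)
  then show ?case using insert by simp
qed

lemma fun_upd_in_binary_configs: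
  "\<tau> \<in> binary_configs I \<Longrightarrow> b \<in> {0, 1} \<Longrightarrow> \<tau>(i := b) \<in> binary_configs (insert i I)"
  unfolding binary_configs_def by (auto simp: PiE_iff extensional_def)

lemma sum_binary_configs_insert:
  assumes "i \<notin> I"
  shows "(\<Sum>\<sigma>\<in>binary_configs (insert i I). h \<sigma>) =
         (\<Sum>\<tau>\<in>binary_configs I. \<Sum>b\<in>{0::nat, 1}. h (\<tau>(i := b)))"
proof -
  have "(\<Sum>\<sigma>\<in>binary_configs (insert i I). h \<sigma>) =
        (\<Sum>(b, \<tau>)\<in>{0::nat, 1} \<times> binary_configs I. h (\<tau>(i := b)))"
    unfolding binary_configs_def PiE_insert_eq
    by (subst sum.reindex) (use inj_combinator[OF assms, of "\<lambda>_. {0::nat, 1}"] in \<open>auto simp: split_def\<close>)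
  also have "\<dots> = (\<Sum>\<tau>\<in>binary_configs I. \<Sum>b\<in>{0::nat, 1}. h (\<tau>(i := b)))"
    by (subst sum.swap) (simp add: sum.cartesian_product split_def)
  finally show ?thesis .
qed

lemma parent_state_binary:
  assumes "\<And>j. par x = Some j \<Longrightarrow> j \<in> S" "\<tau> \<in> binary_configs S"
  shows "parent_state par \<tau> x \<in> {0, 1}"
  using assms unfolding parent_state_def binary_configs_def by (auto split: option.splits)

lemma parent_state_mono:
  assumes "\<And>j. par x = Some j \<Longrightarrow> j \<in> S" "\<forall>y\<in>S. \<sigma> y \<le> \<tau> y"
  shows "parent_state par \<sigma> x \<le> parent_state par \<tau> x"
  using assms unfolding parent_state_def by (auto split: option.splits)

lemma parent_state_fun_upd:
  "par j \<noteq> Some x \<Longrightarrow> parent_state par (\<tau>(x := b)) j = parent_state par \<tau> j"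
  unfolding parent_state_def by (auto split: option.splits)

lemma two_point_mean_antimono:
  fixes a b a0 b0 h0 h1 :: real
  assumes "a \<le> b" "a0 + a = 1" "b0 + b = 1" "h1 \<le> h0"
  shows "b0 * h0 + b * h1 \<le> a0 * h0 + a * h1"
proof -
  have "a0 * h0 + a * h1 - (b0 * h0 + b * h1) = (h0 - h1) * (b - a)"
    using assms(2,3) by algebra
  moreover have "(h0 - h1) * (b - a) \<ge> 0" using assms by simp
  ultimately show ?thesis by linarith
qed

lemma two_point_chebyshev:
  fixes a0 a1 f0 f1 g0 g1 :: real
  assumes "a0 \<ge> 0" "a1 \<ge> 0" "a0 + a1 = 1" "f1 \<le> f0" "g1 \<le> g0"
  shows "(a0 * f0 + a1 * f1) * (a0 * g0 + a1 * g1) \<le> a0 * (f0 * g0) + a1 * (f1 * g1)"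
proof -
  have "a0 * (f0 * g0) + a1 * (f1 * g1) - (a0 * f0 + a1 * f1) * (a0 * g0 + a1 * g1) =
        a0 * a1 * (f0 - f1) * (g0 - g1)"
  proof -
    have "a1 = 1 - a0" using assms(3) by simp
    then show ?thesis by algebra
  qed
  moreover have "a0 * a1 * (f0 - f1) * (g0 - g1) \<ge> 0" using assms by simp
  ultimately show ?thesis by linarith
qed

locale monotone_markov_forest =
  fixes par :: "'s \<Rightarrow> 's option" and K :: "'s \<Rightarrow> nat \<Rightarrow> nat \<Rightarrow> real"
    and rank :: "'s \<Rightarrow> nat" and U :: "'s set"
  assumes kernel_nonneg: "i \<in> U \<Longrightarrow> s \<in> {0, 1} \<Longrightarrow> t \<in> {0, 1} \<Longrightarrow> K i s t \<ge> 0"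
    and kernel_sum: "i \<in> U \<Longrightarrow> s \<in> {0, 1} \<Longrightarrow> K i s 0 + K i s 1 = 1"
    and kernel_monotone: "i \<in> U \<Longrightarrow> K i 0 1 \<le> K i 1 1"
    and rank_parent_less: "i \<in> U \<Longrightarrow> par i = Some j \<Longrightarrow> rank j < rank i"
begin

definition integrate_out :: "'s \<Rightarrow> (('s \<Rightarrow> nat) \<Rightarrow> real) \<Rightarrow> ('s \<Rightarrow> nat) \<Rightarrow> real" where
  "integrate_out x H \<tau> = (\<Sum>b\<in>{0::nat, 1}. K x (parent_state par \<tau> x) b * H (\<tau>(x := b)))"

lemma config_weight_nonneg:
  assumes "I \<subseteq> U" "parent_closed par I" "\<sigma> \<in> binary_configs I"
  shows "config_weight par K I \<sigma> \<ge> 0"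
  unfolding config_weight_def
proof (rule prod_nonneg)
  fix i assume "i \<in> I"
  have "parent_state par \<sigma> i \<in> {0, 1}"
    using assms(2,3) \<open>i \<in> I\<close> by (intro parent_state_binary) (auto simp: parent_closed_def)
  moreover have "\<sigma> i \<in> {0, 1}" using assms(3) \<open>i \<in> I\<close> by (auto simp: binary_configs_def)
  ultimately show "K i (parent_state par \<sigma> i) (\<sigma> i) \<ge> 0"
    using \<open>i \<in> I\<close> assms(1) by (auto intro: kernel_nonneg)
qed

lemma forest_expectation_cong:
  "(\<And>\<sigma>. \<sigma> \<in> binary_configs I \<Longrightarrow> F \<sigma> = G \<sigma>) \<Longrightarrow>
    forest_expectation par K I F = forest_expectation par K I G"
  unfolding forest_expectation_def by (rule sum.cong) auto

lemma forest_expectation_mono: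
  "I \<subseteq> U \<Longrightarrow> parent_closed par I \<Longrightarrow> (\<And>\<sigma>. \<sigma> \<in> binary_configs I \<Longrightarrow> F \<sigma> \<le> G \<sigma>) \<Longrightarrow>
    forest_expectation par K I F \<le> forest_expectation par K I G"
  unfolding forest_expectation_def by (rule sum_mono) (simp add: mult_left_mono config_weight_nonneg)

lemma forest_expectation_nonneg:
  "I \<subseteq> U \<Longrightarrow> parent_closed par I \<Longrightarrow> \<forall>\<sigma>\<in>binary_configs I. F \<sigma> \<ge> 0 \<Longrightarrow>
    forest_expectation par K I F \<ge> 0"
  unfolding forest_expectation_def by (rule sum_nonneg) (simp add: config_weight_nonneg)

text \<open>A vertex of maximal rank is a leaf of the forest, so it can be integrated out first.\<close>

lemma parent_closed_insert_maximal:
  assumes "insert x S \<subseteq> U" "parent_closed par (insert x S)" "\<And>y. y \<in> S \<Longrightarrow> rank y \<le> rank x"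
  shows "\<forall>j\<in>S. par j \<noteq> Some x"
    and "\<And>j. par x = Some j \<Longrightarrow> j \<in> S"
    and "parent_closed par S"
proof -
  show no_child: "\<forall>j\<in>S. par j \<noteq> Some x"
    using assms rank_parent_less by (meson insert_subset leD subsetD)
  show "j \<in> S" if "par x = Some j" for j
    using assms that rank_parent_less[of x j] unfolding parent_closed_def by auto
  show "parent_closed par S"
    using assms(2) no_child unfolding parent_closed_def by blast
qed

lemma forest_expectation_insert:
  assumes "finite I" "x \<notin> I" "x \<in> U" "\<forall>j\<in>I. par j \<noteq> Some x"
  shows "forest_expectation par K (insert x I) H = forest_expectation par K I (integrate_out x H)"
proof -
  have "config_weight par K (insert x I) (\<tau>(x := b)) =
        K x (parent_state par \<tau> x) b * config_weight par K I \<tau>" for \<tau> b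
  proof -
    have "par x \<noteq> Some x" using rank_parent_less[OF \<open>x \<in> U\<close>] by auto
    moreover have "config_weight par K I (\<tau>(x := b)) = config_weight par K I \<tau>"
      unfolding config_weight_def using assms by (intro prod.cong) (auto simp: parent_state_fun_upd)
    ultimately show ?thesis
      using assms unfolding config_weight_def by (simp add: parent_state_fun_upd)
  qed
  then show ?thesis
    unfolding forest_expectation_def integrate_out_def sum_binary_configs_insert[OF assms(2)]
    by (simp add: sum_distrib_left algebra_simps)
qed

context
  fixes x S
  assumes x_in_U: "x \<in> U" and parent_in_S: "\<And>j. par x = Some j \<Longrightarrow> j \<in> S"
begin

lemma integrate_out_one: "\<tau> \<in> binary_configs S \<Longrightarrow> integrate_out x (\<lambda>_. 1) \<tau> = 1"
  unfolding integrate_out_def using kernel_sum[OF x_in_U parent_state_binary[OF parent_in_S]] by simp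

text \<open>The kernel moves weight to state 1 as the parent's state increases, and H prefers
  state 0.\<close>

lemma integrate_out_decreasing:
  assumes H: "decreasing_on (insert x S) H"
  shows "decreasing_on S (integrate_out x H)"
  unfolding decreasing_on_def
proof (intro ballI impI)
  fix \<sigma> \<tau> assume \<sigma>: "\<sigma> \<in> binary_configs S" and \<tau>: "\<tau> \<in> binary_configs S"
    and le: "\<forall>y\<in>S. \<sigma> y \<le> \<tau> y"
  let ?s = "parent_state par \<sigma> x" and ?t = "parent_state par \<tau> x"
  have s: "?s \<in> {0, 1}" and t: "?t \<in> {0, 1}"
    using parent_state_binary[OF parent_in_S] \<sigma> \<tau> by blast+
  have "H (\<tau>(x := b)) \<le> H (\<sigma>(x := b))" if "b \<in> {0, 1}" for b
    by (rule decreasing_onD[OF H]) (use \<sigma> \<tau> le that in \<open>auto intro: fun_upd_in_binary_configs\<close>)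
  then have "integrate_out x H \<tau> \<le> K x ?t 0 * H (\<sigma>(x := 0)) + K x ?t 1 * H (\<sigma>(x := 1))"
    unfolding integrate_out_def using kernel_nonneg[OF x_in_U t]
    by (simp add: add_mono mult_left_mono)
  also have "\<dots> \<le> K x ?s 0 * H (\<sigma>(x := 0)) + K x ?s 1 * H (\<sigma>(x := 1))"
  proof (rule two_point_mean_antimono)
    show "K x ?s 1 \<le> K x ?t 1"
      using s t parent_state_mono[where par = par and x = x and S = S, OF parent_in_S le]
        kernel_monotone[OF x_in_U]
      by auto
    show "H (\<sigma>(x := 1)) \<le> H (\<sigma>(x := 0))"
      by (rule decreasing_onD[OF H]) (use \<sigma> in \<open>auto intro: fun_upd_in_binary_configs\<close>)
  qed (use kernel_sum[OF x_in_U s] kernel_sum[OF x_in_U t] in auto)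
  also have "\<dots> = integrate_out x H \<sigma>"
    by (simp add: integrate_out_def)
  finally show "integrate_out x H \<tau> \<le> integrate_out x H \<sigma>" .
qed

lemma integrate_out_mult_ge:
  assumes F: "decreasing_on (insert x S) F" and G: "decreasing_on (insert x S) G"
    and \<tau>: "\<tau> \<in> binary_configs S"
  shows "integrate_out x F \<tau> * integrate_out x G \<tau> \<le> integrate_out x (\<lambda>\<sigma>. F \<sigma> * G \<sigma>) \<tau>"
proof -
  have s: "parent_state par \<tau> x \<in> {0, 1}" using parent_state_binary[OF parent_in_S \<tau>] .
  have "F (\<tau>(x := 1)) \<le> F (\<tau>(x := 0))" "G (\<tau>(x := 1)) \<le> G (\<tau>(x := 0))"
    by (rule decreasing_onD[OF F] decreasing_onD[OF G];
        use \<tau> in \<open>auto intro: fun_upd_in_binary_configs\<close>)+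
  then show ?thesis
    unfolding integrate_out_def
    using two_point_chebyshev[OF kernel_nonneg[OF x_in_U s] kernel_nonneg[OF x_in_U s]
        kernel_sum[OF x_in_U s]]
    by simp
qed

end

lemma forest_expectation_one:
  assumes "finite I" "I \<subseteq> U" "parent_closed par I"
  shows "forest_expectation par K I (\<lambda>_. 1) = 1"
  using assms
proof (induction I rule: finite_ranking_induct[where f = rank])
  case empty
  then show ?case by (simp add: forest_expectation_def binary_configs_def config_weight_def)
next
  case (insert x S)
  show ?case
  proof (cases "x \<in> S")
    case True
    then show ?thesis using insert by (simp add: insert_absorb)
  next
    case False
    note maximal = parent_closed_insert_maximal[OF insert.prems insert.hyps(2)]
    have x: "x \<in> U" using insert.prems by simp
    have "forest_expectation par K (insert x S) (\<lambda>_. 1) =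
          forest_expectation par K S (integrate_out x (\<lambda>_. 1))"
      by (simp only: forest_expectation_insert[OF insert.hyps(1) False x maximal(1)])
    also have "\<dots> = forest_expectation par K S (\<lambda>_. 1)"
      by (intro forest_expectation_cong integrate_out_one[OF x maximal(2)])
    finally show ?thesis using insert.IH insert.prems maximal(3) by simp
  qed
qed

theorem harris_inequality:
  assumes "finite I" "I \<subseteq> U" "parent_closed par I"
    and "decreasing_on I F" "decreasing_on I G"
  shows "forest_expectation par K I F * forest_expectation par K I G \<le>
         forest_expectation par K I (\<lambda>\<sigma>. F \<sigma> * G \<sigma>)"
  using assms
proof (induction I arbitrary: F G rule: finite_ranking_induct[where f = rank])
  case empty
  then show ?case by (simp add: forest_expectation_def binary_configs_def config_weight_def)
next
  case (insert x S)
  show ?case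
  proof (cases "x \<in> S")
    case True
    then show ?thesis using insert by (simp add: insert_absorb)
  next
    case False
    note maximal = parent_closed_insert_maximal[OF insert.prems(1,2) insert.hyps(2)]
    have x: "x \<in> U" and S: "S \<subseteq> U" using insert.prems by auto
    note expand = forest_expectation_insert[OF insert.hyps(1) False x maximal(1)]
    note step = integrate_out_decreasing[OF x maximal(2)] integrate_out_mult_ge[OF x maximal(2)]
    have "forest_expectation par K (insert x S) F * forest_expectation par K (insert x S) G =
          forest_expectation par K S (integrate_out x F) * forest_expectation par K S (integrate_out x G)"
      by (simp only: expand)
    also have "\<dots> \<le> forest_expectation par K S (\<lambda>\<tau>. integrate_out x F \<tau> * integrate_out x G \<tau>)"
      using insert.IH S maximal(3) step(1) insert.prems(3,4) by blast
    also have "\<dots> \<le> forest_expectation par K S (integrate_out x (\<lambda>\<sigma>. F \<sigma> * G \<sigma>))"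
      using S maximal(3) step(2) insert.prems(3,4) by (intro forest_expectation_mono)
    also have "\<dots> = forest_expectation par K (insert x S) (\<lambda>\<sigma>. F \<sigma> * G \<sigma>)"
      by (simp only: expand)
    finally show ?thesis .
  qed
qed

corollary harris_inequality_prod:
  assumes I: "finite I" "I \<subseteq> U" "parent_closed par I"
    and "finite C" "\<forall>x\<in>C. decreasing_on I (f x) \<and> (\<forall>\<sigma>\<in>binary_configs I. f x \<sigma> \<ge> 0)"
  shows "(\<Prod>x\<in>C. forest_expectation par K I (f x)) \<le>
         forest_expectation par K I (\<lambda>\<sigma>. \<Prod>x\<in>C. f x \<sigma>)"
  using assms(4,5)
proof (induction C rule: finite_induct)
  case empty
  then show ?case using forest_expectation_one[OF I] by simp
next
  case (insert a C)
  have "(\<Prod>x\<in>insert a C. forest_expectation par K I (f x)) =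
        forest_expectation par K I (f a) * (\<Prod>x\<in>C. forest_expectation par K I (f x))"
    using insert by simp
  also have "\<dots> \<le> forest_expectation par K I (f a) * forest_expectation par K I (\<lambda>\<sigma>. \<Prod>x\<in>C. f x \<sigma>)"
    using insert I by (intro mult_left_mono forest_expectation_nonneg) auto
  also have "\<dots> \<le> forest_expectation par K I (\<lambda>\<sigma>. \<Prod>x\<in>insert a C. f x \<sigma>)"
    using harris_inequality[OF I] insert decreasing_on_prod[OF insert(1), where f = f and I = I] by auto
  finally show ?case .
qed

end

section \<open>Rooted trees\<close>

definition parent :: "('v \<times> 'v) set \<Rightarrow> 'v \<Rightarrow> 'v" where
  "parent A v = (THE u. (u, v) \<in> A)"

definition depth :: "('v \<times> 'v) set \<Rightarrow> 'v \<Rightarrow> 'v \<Rightarrow> nat" where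
  "depth A rho v = (LEAST n. (rho, v) \<in> A ^^ n)"

context
  fixes V :: "'v set" and A :: "('v \<times> 'v) set" and rho :: 'v
  assumes tree: "rooted_tree V A rho"
begin

lemma rooted_tree_arcs: "A \<subseteq> V \<times> V"
  and rooted_tree_finite: "finite V"
  and rooted_tree_root: "rho \<in> V"
  and rooted_tree_no_arc_into_root: "(u, rho) \<notin> A"
  and rooted_tree_unique_parent: "v \<in> V - {rho} \<Longrightarrow> \<exists>!u. (u, v) \<in> A"
  and rooted_tree_reachable: "v \<in> V \<Longrightarrow> (rho, v) \<in> A\<^sup>*"
  using tree unfolding rooted_tree_def by auto

lemma parent_arc: "v \<in> V - {rho} \<Longrightarrow> (parent A v, v) \<in> A"
  unfolding parent_def by (rule theI') (rule rooted_tree_unique_parent)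

lemma arc_parent: "(u, v) \<in> A \<Longrightarrow> u = parent A v \<and> v \<in> V - {rho}"
proof -
  assume a: "(u, v) \<in> A"
  then have v: "v \<in> V - {rho}" using rooted_tree_arcs rooted_tree_no_arc_into_root by blast
  then show ?thesis using rooted_tree_unique_parent[OF v] parent_arc[OF v] a by blast
qed

lemma parent_in_vertices: "v \<in> V - {rho} \<Longrightarrow> parent A v \<in> V"
  using parent_arc rooted_tree_arcs by blast

lemma depth_parent_less: "v \<in> V - {rho} \<Longrightarrow> depth A rho (parent A v) < depth A rho v"
proof -
  assume v: "v \<in> V - {rho}"
  have "\<exists>n. (rho, v) \<in> A ^^ n" using rooted_tree_reachable v rtrancl_power by blast
  then have path: "(rho, v) \<in> A ^^ depth A rho v" unfolding depth_def by (rule LeastI_ex)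
  show ?thesis
  proof (cases "depth A rho v")
    case 0
    then show ?thesis using path v by simp
  next
    case (Suc m)
    then obtain y where y: "(rho, y) \<in> A ^^ m" "(y, v) \<in> A" using path by (auto elim: relpow_Suc_E)
    have "y = parent A v" using arc_parent[OF y(2)] by simp
    then have "depth A rho (parent A v) \<le> m" using y(1) unfolding depth_def by (auto intro: Least_le)
    then show ?thesis using Suc by simp
  qed
qed

lemma bij_betw_parent_arc: "bij_betw (\<lambda>v. (parent A v, v)) (V - {rho}) A"
  unfolding bij_betw_def inj_on_def
  using parent_arc arc_parent by (auto simp: image_iff)

end

section \<open>Expected phylogenetic diversity\<close>

lemma sum_PD_eq_sum_arcs:
  fixes r :: "'v set \<Rightarrow> real"
  assumes "finite V" "A \<subseteq> V \<times> V"
  shows "(\<Sum>S\<in>Pow (leaves V A). r S * PD V A lam S) =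
         (\<Sum>a\<in>A. lam a * ((\<Sum>S\<in>Pow (leaves V A). r S) -
                           (\<Sum>S\<in>Pow (leaves V A - clade V A (snd a)). r S)))"
proof -
  let ?L = "leaves V A"
  have finL: "finite ?L" using assms unfolding leaves_def by auto
  have finA: "finite A" using assms finite_subset by (metis finite_cartesian_product)
  have "(\<Sum>S\<in>Pow ?L. r S * PD V A lam S) =
        (\<Sum>S\<in>Pow ?L. \<Sum>a\<in>A. if clade V A (snd a) \<inter> S \<noteq> {} then lam a * r S else 0)"
    unfolding PD_def
    by (rule sum.cong) (auto simp: sum.inter_filter[OF finA, symmetric] sum_distrib_left intro!: sum.cong)
  also have "\<dots> = (\<Sum>a\<in>A. \<Sum>S\<in>Pow ?L. if clade V A (snd a) \<inter> S \<noteq> {} then lam a * r S else 0)"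
    by (rule sum.swap)
  also have "\<dots> = (\<Sum>a\<in>A. lam a * ((\<Sum>S\<in>Pow ?L. r S) - (\<Sum>S\<in>Pow (?L - clade V A (snd a)). r S)))"
  proof (rule sum.cong[OF refl])
    fix a :: "'v \<times> 'v"
    let ?C = "clade V A (snd a)"
    have hit: "{S \<in> Pow ?L. ?C \<inter> S \<noteq> {}} = Pow ?L - Pow (?L - ?C)"
      unfolding clade_def by auto
    have "(\<Sum>S\<in>Pow ?L. if ?C \<inter> S \<noteq> {} then lam a * r S else 0) =
          lam a * (\<Sum>S\<in>{S \<in> Pow ?L. ?C \<inter> S \<noteq> {}}. r S)"
      using finL by (simp add: sum.inter_filter[symmetric] sum_distrib_left)
    also have "\<dots> = lam a * ((\<Sum>S\<in>Pow ?L. r S) - (\<Sum>S\<in>Pow (?L - ?C). r S))"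
      unfolding hit using finL by (subst sum_diff) auto
    finally show "(\<Sum>S\<in>Pow ?L. if ?C \<inter> S \<noteq> {} then lam a * r S else 0) =
                  lam a * ((\<Sum>S\<in>Pow ?L. r S) - (\<Sum>S\<in>Pow (?L - ?C). r S))" .
  qed
  finally show ?thesis .
qed

lemma sum_Pow_Diff_independent_extinction:
  fixes h :: "'a \<Rightarrow> real"
  assumes "finite L" "C \<subseteq> L"
  shows "(\<Sum>S\<in>Pow (L - C). (\<Prod>x\<in>S. 1 - h x) * (\<Prod>x\<in>L - S. h x)) = (\<Prod>x\<in>C. h x)"
proof -
  have fin: "finite (L - C)" "finite C" using assms finite_subset by auto
  have split: "(\<Prod>x\<in>L - S. h x) = (\<Prod>x\<in>C. h x) * (\<Prod>x\<in>(L - C) - S. h x)"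
    if "S \<in> Pow (L - C)" for S
  proof -
    have "L - S = C \<union> ((L - C) - S)" using that assms by auto
    then have "(\<Prod>x\<in>L - S. h x) = (\<Prod>x\<in>C \<union> ((L - C) - S). h x)" by simp
    also have "\<dots> = (\<Prod>x\<in>C. h x) * (\<Prod>x\<in>(L - C) - S. h x)"
      by (rule prod.union_disjoint) (use fin in auto)
    finally show ?thesis .
  qed
  have "(\<Sum>S\<in>Pow (L - C). (\<Prod>x\<in>S. 1 - h x) * (\<Prod>x\<in>L - S. h x)) =
        (\<Prod>x\<in>C. h x) * (\<Sum>S\<in>Pow (L - C). (\<Prod>x\<in>S. 1 - h x) * (\<Prod>x\<in>(L - C) - S. h x))"
    unfolding sum_distrib_left by (rule sum.cong) (simp_all add: split)
  also have "\<dots> = (\<Prod>x\<in>C. h x) * (\<Prod>x\<in>L - C. (1 - h x) + h x)"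
    unfolding prod_add[OF fin(1)] ..
  finally show ?thesis by simp
qed

section \<open>The k trait processes as one Markov forest\<close>

text \<open>The k independent copies of the tree, with vertex (j, v) carrying the state of the
  j-th trait at v.\<close>

definition trait_parent :: "'v set \<Rightarrow> ('v \<times> 'v) set \<Rightarrow> 'v \<Rightarrow> nat \<times> 'v \<Rightarrow> (nat \<times> 'v) option" where
  "trait_parent V A rho = (\<lambda>(j, v). if v \<in> V - {rho} then Some (j, parent A v) else None)"

definition trait_kernel ::
    "('v \<times> 'v) set \<Rightarrow> 'v \<Rightarrow> (nat \<Rightarrow> nat \<Rightarrow> real) \<Rightarrow> (nat \<Rightarrow> ('v \<times> 'v) \<Rightarrow> nat \<Rightarrow> nat \<Rightarrow> real) \<Rightarrow>
     nat \<times> 'v \<Rightarrow> nat \<Rightarrow> nat \<Rightarrow> real" where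
  "trait_kernel A rho rp P = (\<lambda>(j, v) s t. if v = rho then rp j t else P j (parent A v, v) s t)"

definition trait_rank :: "('v \<times> 'v) set \<Rightarrow> 'v \<Rightarrow> nat \<times> 'v \<Rightarrow> nat" where
  "trait_rank A rho = (\<lambda>(j, v). depth A rho v)"

definition curry_config :: "nat \<Rightarrow> 'v set \<Rightarrow> (nat \<times> 'v \<Rightarrow> nat) \<Rightarrow> nat \<Rightarrow> 'v \<Rightarrow> nat" where
  "curry_config k V \<sigma> = (\<lambda>j\<in>{..<k}. \<lambda>v\<in>V. \<sigma> (j, v))"

text \<open>The hypothesis det P \<ge> 0 is exactly stochastic monotonicity P 0 1 \<le> P 1 1.\<close>

lemma two_state_markov_monotone:
  assumes "two_state_markov A rp P" "a \<in> A"
  shows "P a 0 1 \<le> P a 1 1"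
proof -
  have rows: "P a 0 0 = 1 - P a 0 1" "P a 1 0 = 1 - P a 1 1"
    and det: "P a 0 0 * P a 1 1 - P a 0 1 * P a 1 0 \<ge> 0"
    using assms unfolding two_state_markov_def by auto
  have "P a 0 0 * P a 1 1 - P a 0 1 * P a 1 0 = P a 1 1 - P a 0 1"
    unfolding rows by algebra
  with det show ?thesis by simp
qed

lemma monotone_markov_forest_traits:
  assumes tree: "rooted_tree V A rho" and markov: "\<forall>j<k. two_state_markov A (rp j) (P j)"
  shows "monotone_markov_forest (trait_parent V A rho) (trait_kernel A rho rp P)
           (trait_rank A rho) ({..<k} \<times> V)"
proof
  fix i assume "i \<in> {..<k} \<times> V"
  then obtain j v where i: "i = (j, v)" and j: "two_state_markov A (rp j) (P j)" and v: "v \<in> V"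
    using markov by auto
  have arc: "v \<noteq> rho \<Longrightarrow> (parent A v, v) \<in> A" using parent_arc[OF tree] v by auto
  show "trait_kernel A rho rp P i s t \<ge> 0" if "s \<in> {0, 1}" "t \<in> {0, 1}" for s t
    using j arc that unfolding i trait_kernel_def two_state_markov_def by auto
  show "trait_kernel A rho rp P i s 0 + trait_kernel A rho rp P i s 1 = 1" if "s \<in> {0, 1}" for s
    using j arc that unfolding i trait_kernel_def two_state_markov_def by auto
  show "trait_kernel A rho rp P i 0 1 \<le> trait_kernel A rho rp P i 1 1"
    using two_state_markov_monotone[OF j] arc unfolding i trait_kernel_def by auto
  show "trait_rank A rho i' < trait_rank A rho i" if "trait_parent V A rho i = Some i'" for i'
    using that depth_parent_less[OF tree] unfolding i trait_parent_def trait_rank_def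
    by (auto split: if_splits)
qed

lemma parent_closed_traits:
  assumes "rooted_tree V A rho"
  shows "parent_closed (trait_parent V A rho) ({..<k} \<times> V)"
  unfolding parent_closed_def trait_parent_def using parent_in_vertices[OF assms]
  by (auto split: if_splits)

lemma bij_betw_curry_config:
  "bij_betw (curry_config k V) (binary_configs ({..<k} \<times> V)) (configs k V)"
proof (rule bij_betw_byWitness[where f' = "\<lambda>\<sigma>s. restrict (\<lambda>(j, v). \<sigma>s j v) ({..<k} \<times> V)"])
  show "\<forall>\<sigma>\<in>binary_configs ({..<k} \<times> V).
          restrict (\<lambda>(j, v). curry_config k V \<sigma> j v) ({..<k} \<times> V) = \<sigma>"
    unfolding binary_configs_def curry_config_def by (auto simp: PiE_iff extensional_def)
  show "\<forall>\<sigma>s\<in>configs k V. curry_config k V (restrict (\<lambda>(j, v). \<sigma>s j v) ({..<k} \<times> V)) = \<sigma>s"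
    unfolding configs_def curry_config_def by (auto simp: PiE_iff extensional_def fun_eq_iff)
  show "curry_config k V ` binary_configs ({..<k} \<times> V) \<subseteq> configs k V"
    unfolding binary_configs_def curry_config_def configs_def
    by (auto simp: PiE_iff) (metis lessThan_iff neq0_conv)
  show "(\<lambda>\<sigma>s. restrict (\<lambda>(j, v). \<sigma>s j v) ({..<k} \<times> V)) ` configs k V \<subseteq> binary_configs ({..<k} \<times> V)"
    unfolding binary_configs_def configs_def by (auto simp: PiE_iff) (metis lessThan_iff neq0_conv)
qed

lemma leaf_state_curry_config:
  "x \<in> V \<Longrightarrow> leaf_state k (curry_config k V \<sigma>) x = restrict (\<lambda>j. \<sigma> (j, x)) {..<k}"
  unfolding leaf_state_def curry_config_def by auto

lemma joint_prob_curry_config: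
  assumes tree: "rooted_tree V A rho"
  shows "joint_prob k A rho rp P (curry_config k V \<sigma>) =
         config_weight (trait_parent V A rho) (trait_kernel A rho rp P) ({..<k} \<times> V) \<sigma>"
proof -
  have V: "finite V" "rho \<in> V" and AV: "A \<subseteq> V \<times> V"
    using rooted_tree_finite[OF tree] rooted_tree_root[OF tree] rooted_tree_arcs[OF tree] .
  have "tree_prob A rho (rp j) (P j) (curry_config k V \<sigma> j) =
        (\<Prod>v\<in>V. trait_kernel A rho rp P (j, v) (parent_state (trait_parent V A rho) \<sigma> (j, v)) (\<sigma> (j, v)))"
    if j: "j < k" for j
  proof -
    have "(\<Prod>a\<in>A. P j a (curry_config k V \<sigma> j (fst a)) (curry_config k V \<sigma> j (snd a))) =
          (\<Prod>a\<in>A. P j a (\<sigma> (j, fst a)) (\<sigma> (j, snd a)))"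
      using j AV by (auto simp: curry_config_def intro!: prod.cong)
    also have "\<dots> = (\<Prod>v\<in>V - {rho}. P j (parent A v, v) (\<sigma> (j, parent A v)) (\<sigma> (j, v)))"
      using prod.reindex_bij_betw[OF bij_betw_parent_arc[OF tree],
          of "\<lambda>a. P j a (\<sigma> (j, fst a)) (\<sigma> (j, snd a))"] by simp
    finally show ?thesis
      unfolding tree_prob_def using j V
      by (subst prod.remove[of _ rho])
         (auto simp: curry_config_def trait_kernel_def trait_parent_def parent_state_def intro!: prod.cong)
  qed
  then show ?thesis
    unfolding joint_prob_def config_weight_def by (simp add: prod.cartesian_product)
qed

lemma sum_joint_prob_eq_forest_expectation:
  assumes "rooted_tree V A rho"
  shows "(\<Sum>\<sigma>s\<in>configs k V. joint_prob k A rho rp P \<sigma>s * \<Phi> \<sigma>s) =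
         forest_expectation (trait_parent V A rho) (trait_kernel A rho rp P) ({..<k} \<times> V)
           (\<lambda>\<sigma>. \<Phi> (curry_config k V \<sigma>))"
  unfolding forest_expectation_def
  using sum.reindex_bij_betw[OF bij_betw_curry_config, of "\<lambda>\<sigma>s. joint_prob k A rho rp P \<sigma>s * \<Phi> \<sigma>s" k V]
  by (simp add: joint_prob_curry_config[OF assms])

section \<open>Extinction of a clade under the t-FOB model\<close>

definition tfob_all_extinct_prob ::
    "nat \<Rightarrow> 'v set \<Rightarrow> ('v \<times> 'v) set \<Rightarrow> 'v \<Rightarrow> (nat \<Rightarrow> nat \<Rightarrow> real) \<Rightarrow>
     (nat \<Rightarrow> ('v \<times> 'v) \<Rightarrow> nat \<Rightarrow> nat \<Rightarrow> real) \<Rightarrow> ('v \<Rightarrow> (nat \<Rightarrow> nat) \<Rightarrow> real) \<Rightarrow> 'v set \<Rightarrow> real" where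
  "tfob_all_extinct_prob k V A rho rp P p C =
     (\<Sum>\<sigma>s\<in>configs k V. joint_prob k A rho rp P \<sigma>s * (\<Prod>x\<in>C. p x (leaf_state k \<sigma>s x)))"

lemma sum_tfob_surv_prob_Pow_Diff:
  assumes "finite V" "C \<subseteq> leaves V A"
  shows "(\<Sum>S\<in>Pow (leaves V A - C). tfob_surv_prob k V A rho rp P p S) =
         tfob_all_extinct_prob k V A rho rp P p C"
proof -
  have "finite (leaves V A)" using assms(1) unfolding leaves_def by simp
  note extinct = sum_Pow_Diff_independent_extinction[OF this assms(2)]
  show ?thesis
    unfolding tfob_surv_prob_def tfob_all_extinct_prob_def
    by (subst sum.swap) (simp add: mult.assoc sum_distrib_left[symmetric] extinct)
qed

lemma tfob_all_extinct_prob_empty: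
  assumes tree: "rooted_tree V A rho" and markov: "\<forall>j<k. two_state_markov A (rp j) (P j)"
  shows "tfob_all_extinct_prob k V A rho rp P p {} = 1"
  unfolding tfob_all_extinct_prob_def sum_joint_prob_eq_forest_expectation[OF tree]
  using monotone_markov_forest.forest_expectation_one[OF monotone_markov_forest_traits[OF tree markov]]
    rooted_tree_finite[OF tree] parent_closed_traits[OF tree]
  by simp

lemma gfob_ext_prob_eq_tfob_extinct:
  assumes "finite V" "x \<in> V"
  shows "gfob_ext_prob k V A rho rp P p x = tfob_all_extinct_prob k V A rho rp P p {x}"
proof -
  have fin: "finite (configs k V)" "finite (states k)"
    unfolding configs_def states_def using assms(1) by (auto intro!: finite_PiE)
  have state: "leaf_state k \<sigma>s x \<in> states k" if "\<sigma>s \<in> configs k V" for \<sigma>s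
    using that assms(2) unfolding leaf_state_def states_def configs_def by (auto simp: PiE_iff)
  have "gfob_ext_prob k V A rho rp P p x =
        (\<Sum>i\<in>states k. \<Sum>\<sigma>s\<in>configs k V.
           if leaf_state k \<sigma>s x = i then joint_prob k A rho rp P \<sigma>s * p x i else 0)"
    unfolding gfob_ext_prob_def leaf_marginal_def
    by (simp add: sum.inter_filter[OF fin(1), symmetric] sum_distrib_left mult.commute)
  also have "\<dots> = tfob_all_extinct_prob k V A rho rp P p {x}"
    unfolding tfob_all_extinct_prob_def
    by (subst sum.swap, rule sum.cong) (simp_all add: sum.delta'[OF fin(2)] state)
  finally show ?thesis .
qed

lemma prod_tfob_all_extinct_prob_singleton_le:
  assumes tree: "rooted_tree V A rho" and markov: "\<forall>j<k. two_state_markov A (rp j) (P j)"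
    and p_range: "\<forall>x\<in>leaves V A. \<forall>i\<in>states k. 0 \<le> p x i"
    and p_mono: "\<forall>x\<in>leaves V A. \<forall>i\<in>states k. \<forall>l\<in>states k. (\<forall>j<k. l j \<le> i j) \<longrightarrow> p x i \<le> p x l"
    and C: "C \<subseteq> leaves V A"
  shows "(\<Prod>x\<in>C. tfob_all_extinct_prob k V A rho rp P p {x}) \<le> tfob_all_extinct_prob k V A rho rp P p C"
proof -
  let ?U = "{..<k} \<times> V"
  let ?f = "\<lambda>x \<sigma>. p x (leaf_state k (curry_config k V \<sigma>) x)"
  have V: "finite V" and CV: "C \<subseteq> V" using rooted_tree_finite[OF tree] C by (auto simp: leaves_def)
  have state: "restrict (\<lambda>j. \<sigma> (j, x)) {..<k} \<in> states k" if "\<sigma> \<in> binary_configs ?U" "x \<in> V" for \<sigma> x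
    using that unfolding states_def binary_configs_def by (auto simp: PiE_iff)
  have "\<forall>x\<in>C. decreasing_on ?U (?f x) \<and> (\<forall>\<sigma>\<in>binary_configs ?U. ?f x \<sigma> \<ge> 0)"
    using C CV p_range p_mono state unfolding decreasing_on_def
    by (auto simp: leaf_state_curry_config subset_iff)
  then show ?thesis
    unfolding tfob_all_extinct_prob_def sum_joint_prob_eq_forest_expectation[OF tree]
    using monotone_markov_forest.harris_inequality_prod[OF monotone_markov_forest_traits[OF tree markov]
        _ subset_refl parent_closed_traits[OF tree]] V finite_subset[OF CV V]
    by simp
qed

theorem theorem3p1:
  fixes V :: "'v set" and A :: "('v \<times> 'v) set" and rho :: 'v
    and lam :: "('v \<times> 'v) \<Rightarrow> real"
    and k :: nat
    and rp :: "nat \<Rightarrow> nat \<Rightarrow> real"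
    and P :: "nat \<Rightarrow> ('v \<times> 'v) \<Rightarrow> nat \<Rightarrow> nat \<Rightarrow> real"
    and p :: "'v \<Rightarrow> (nat \<Rightarrow> nat) \<Rightarrow> real"
  assumes tree: "rooted_tree V A rho"
    and lam_nonneg: "\<forall>a \<in> A. lam a \<ge> 0"
    and markov: "\<forall>j < k. two_state_markov A (rp j) (P j)"
    and p_range: "\<forall>x \<in> leaves V A. \<forall>i \<in> states k. 0 \<le> p x i \<and> p x i \<le> 1"
    and p_mono: "\<forall>x \<in> leaves V A. \<forall>i \<in> states k. \<forall>l \<in> states k.
                   (\<forall>j < k. l j \<le> i j) \<longrightarrow> p x i \<le> p x l"
  shows "tfob_expected_PD k V A rho lam rp P p
           \<le> gfob_expected_PD V A lam (gfob_ext_prob k V A rho rp P p)"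
proof -
  let ?L = "leaves V A" and ?C = "\<lambda>a. clade V A (snd a)"
  let ?E = "tfob_all_extinct_prob k V A rho rp P p" and ?q = "gfob_ext_prob k V A rho rp P p"
  have V: "finite V" and AV: "A \<subseteq> V \<times> V" and L: "finite ?L"
    using rooted_tree_finite[OF tree] rooted_tree_arcs[OF tree] by (auto simp: leaves_def)
  have C: "?C a \<subseteq> ?L" for a unfolding clade_def by auto
  have "tfob_expected_PD k V A rho lam rp P p = (\<Sum>a\<in>A. lam a * (1 - ?E (?C a)))"
    unfolding tfob_expected_PD_def sum_PD_eq_sum_arcs[OF V AV]
    by (simp add: sum_tfob_surv_prob_Pow_Diff[OF V C]
        sum_tfob_surv_prob_Pow_Diff[OF V empty_subsetI, simplified]
        tfob_all_extinct_prob_empty[OF tree markov])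
  also have "\<dots> \<le> (\<Sum>a\<in>A. lam a * (1 - (\<Prod>x\<in>?C a. ?q x)))"
  proof (intro sum_mono mult_left_mono diff_left_mono)
    fix a assume "a \<in> A"
    have "(\<Prod>x\<in>?C a. ?q x) = (\<Prod>x\<in>?C a. ?E {x})"
      using V by (intro prod.cong refl gfob_ext_prob_eq_tfob_extinct) (auto simp: clade_def leaves_def)
    also have "\<dots> \<le> ?E (?C a)"
      using prod_tfob_all_extinct_prob_singleton_le[OF tree markov _ p_mono C] p_range by blast
    finally show "(\<Prod>x\<in>?C a. ?q x) \<le> ?E (?C a)" .
    show "lam a \<ge> 0" using lam_nonneg \<open>a \<in> A\<close> by blast
  qed
  also have "\<dots> = gfob_expected_PD V A lam ?q"
    unfolding gfob_expected_PD_def sum_PD_eq_sum_arcs[OF V AV]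
    by (simp add: mult.assoc sum_Pow_Diff_independent_extinction[OF L C]
        sum_Pow_Diff_independent_extinction[OF L empty_subsetI, simplified])
  finally show ?thesis .
qed

end
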